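(* Let $p\neq 2$ be a prime and $G=Z_{p^{\lambda_1}}\times\cdots\times Z_{p^{\lambda_n}}$ with $0<\lambda_1<\cdots<\lambda_n$. If $n\ge 3$ and $\lambda_n-\lambda_{n-1}=1$, then $J(G)$ has precisely two maximal down-set chains, namely $D_1(G)=\{J(i,1):i\in\{1,\dots,n\}\}$ and $$D_2'(G)=\{J(n-1,j):j\in\{1,\dots,\lambda_{n-1}-\lambda_{n-2}\}\}\cup\{J(n,j):j\in\{1,\dots,\lambda_{n-1}-\lambda_{n-2}+1\}\}.$$
   Context: Tuples are ordered componentwise; for $\mathbf 0\le\mathbf a\le(\lambda_1,\dots,\lambda_n)$, $T(\mathbf a)$ is the set of $(g_1,\dots,g_n)\in G$ with $|g_i|=p^{a_i}$, and $R(\mathbf a)=\bigcup_{\mathbf b\le\mathbf a}T(\mathbf b)$. For $i\in\{1,\dots,n\}$ and $j\in\{1,\dots,\lambda_i\}$, $J(i,j)=R(\mathbf a)$ where $a_k=j$ for $k\ge i$ and $a_k=\max\{0,\,j-(\lambda_i-\lambda_k)\}$ for $k<i$. $J(G)$ is the set of all $J(i,j)$, partially ordered by inclusion. A down set of a poset $P$ is a subset $X$ such that $x\le y\in X$ implies $x\in X$; a down-set chain is a subset that is both a chain and a down set; it is maximal if it is not contained in a strictly larger down-set chain. *)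

theory Defs
  imports Main "HOL-Computational_Algebra.Primes"
begin

text \<open>G = Z_{p^lam_1} x ... x Z_{p^lam_n}; elements are tuples indexed by 1..n,
  represented as functions nat => nat, with g i < p^(lam i) for i in {1..n} and
  g i = 0 outside {1..n}.\<close>

definition cyc_group :: "nat \<Rightarrow> nat \<Rightarrow> (nat \<Rightarrow> nat) \<Rightarrow> (nat \<Rightarrow> nat) set" where
  "cyc_group p n lam = {g. (\<forall>i\<in>{1..n}. g i < p ^ lam i) \<and> (\<forall>i. i \<notin> {1..n} \<longrightarrow> g i = 0)}"

definition add_ord :: "nat \<Rightarrow> nat \<Rightarrow> nat" where
  "add_ord m x = m div gcd x m"

definition T_set :: "nat \<Rightarrow> nat \<Rightarrow> (nat \<Rightarrow> nat) \<Rightarrow> (nat \<Rightarrow> nat) \<Rightarrow> (nat \<Rightarrow> nat) set" where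
  "T_set p n lam a = {g \<in> cyc_group p n lam. \<forall>i\<in>{1..n}. add_ord (p ^ lam i) (g i) = p ^ a i}"

definition R_set :: "nat \<Rightarrow> nat \<Rightarrow> (nat \<Rightarrow> nat) \<Rightarrow> (nat \<Rightarrow> nat) \<Rightarrow> (nat \<Rightarrow> nat) set" where
  "R_set p n lam a = (\<Union>b\<in>{b. \<forall>i\<in>{1..n}. b i \<le> a i}. T_set p n lam b)"

text \<open>J(i,j); natural-number subtraction truncates at 0, giving max 0 (j - (lam i - lam k)).\<close>
definition J_set :: "nat \<Rightarrow> nat \<Rightarrow> (nat \<Rightarrow> nat) \<Rightarrow> nat \<Rightarrow> nat \<Rightarrow> (nat \<Rightarrow> nat) set" where
  "J_set p n lam i j = R_set p n lam (\<lambda>k. if k \<ge> i then j else j - (lam i - lam k))"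

definition J_poset :: "nat \<Rightarrow> nat \<Rightarrow> (nat \<Rightarrow> nat) \<Rightarrow> (nat \<Rightarrow> nat) set set" where
  "J_poset p n lam = {J_set p n lam i j | i j. i \<in> {1..n} \<and> j \<in> {1..lam i}}"

definition down_set :: "'a set set \<Rightarrow> 'a set set \<Rightarrow> bool" where
  "down_set P X \<longleftrightarrow> X \<subseteq> P \<and> (\<forall>x\<in>P. \<forall>y\<in>X. x \<subseteq> y \<longrightarrow> x \<in> X)"

definition down_set_chain :: "'a set set \<Rightarrow> 'a set set \<Rightarrow> bool" where
  "down_set_chain P X \<longleftrightarrow> down_set P X \<and> chain\<^sub>\<subseteq> X"

definition maximal_down_set_chain :: "'a set set \<Rightarrow> 'a set set \<Rightarrow> bool" where
  "maximal_down_set_chain P X \<longleftrightarrow> down_set_chain P X \<and> \<not> (\<exists>Y. down_set_chain P Y \<and> X \<subset> Y)"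

end

theory Submission
  imports Defs
begin

(*
  Write J(i,j) = R(e) with exponent vector e_k = j - (lam_i - lam_k) (truncated).  Inclusion of the
  sets R(e) is the componentwise order of the exponent vectors, because R(e) contains an element
  whose k-th coordinate has order exactly p^(e_k), and such an element lies in R(e') only if e <= e'.
  Since lam_n = lam_(n-1) + 1, this makes D_1 the principal down set of J(1,1) and D_2' the principal
  down set of J(n, lam_n - lam_(n-2)); both are chains and their generators are incomparable.  Any
  other J(i,j) has j >= 2 and j > lam_i - lam_(n-2), so it lies above the incomparable pair
  J(n-2,1), J(n,2) and its principal down set is not a chain.  Hence every down-set chain is
  contained in one of the two principal ones.
*)

lemma down_set_chain_subset_principal_pair:
  assumes X: "down_set_chain P X"
    and below: "\<And>x. x \<in> P \<Longrightarrow> chain\<^sub>\<subseteq> {y\<in>P. y \<subseteq> x} \<Longrightarrow> x \<subseteq> a \<or> x \<subseteq> b"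
  shows "X \<subseteq> {y\<in>P. y \<subseteq> a} \<or> X \<subseteq> {y\<in>P. y \<subseteq> b}"
proof -
  have XP: "X \<subseteq> P" and chain: "chain\<^sub>\<subseteq> X"
    and down: "\<And>x y. x \<in> P \<Longrightarrow> y \<in> X \<Longrightarrow> x \<subseteq> y \<Longrightarrow> x \<in> X"
    using X unfolding down_set_chain_def down_set_def by blast+
  have ab: "x \<subseteq> a \<or> x \<subseteq> b" if "x \<in> X" for x
  proof (rule below)
    show "x \<in> P" using XP that by blast
    have "{y\<in>P. y \<subseteq> x} \<subseteq> X" using down that by blast
    then show "chain\<^sub>\<subseteq> {y\<in>P. y \<subseteq> x}" using chain unfolding chain_subset_def by blast
  qed
  show ?thesis
  proof (rule ccontr)
    assume "\<not> ?thesis"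
    then obtain x y where "x \<in> X" "\<not> x \<subseteq> a" "y \<in> X" "\<not> y \<subseteq> b" using XP by blast
    moreover from this have "x \<subseteq> y \<or> y \<subseteq> x" using chain unfolding chain_subset_def by blast
    ultimately show False using ab by blast
  qed
qed

lemma maximal_down_set_chains_eq_principal_pair:
  assumes "a \<in> P" "b \<in> P" "\<not> a \<subseteq> b" "\<not> b \<subseteq> a"
    and "chain\<^sub>\<subseteq> {y\<in>P. y \<subseteq> a}" "chain\<^sub>\<subseteq> {y\<in>P. y \<subseteq> b}"
    and below: "\<And>x. x \<in> P \<Longrightarrow> chain\<^sub>\<subseteq> {y\<in>P. y \<subseteq> x} \<Longrightarrow> x \<subseteq> a \<or> x \<subseteq> b"
  shows "{X. maximal_down_set_chain P X} = {{y\<in>P. y \<subseteq> a}, {y\<in>P. y \<subseteq> b}}"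
proof -
  define A where "A = {y\<in>P. y \<subseteq> a}"
  define B where "B = {y\<in>P. y \<subseteq> b}"
  have chains: "down_set_chain P A" "down_set_chain P B"
    using assms(5,6) unfolding A_def B_def down_set_chain_def down_set_def by blast+
  have in_A_or_B: "X \<subseteq> A \<or> X \<subseteq> B" if "down_set_chain P X" for X
    unfolding A_def B_def using that below by (rule down_set_chain_subset_principal_pair)
  have incomparable: "\<not> A \<subseteq> B" "\<not> B \<subseteq> A"
    using assms(1-4) unfolding A_def B_def by blast+
  have "maximal_down_set_chain P X \<longleftrightarrow> X = A \<or> X = B" for X
  proof
    assume "maximal_down_set_chain P X"
    then have "down_set_chain P X" "\<not> X \<subset> A" "\<not> X \<subset> B"
      using chains unfolding maximal_down_set_chain_def by blast+
    then show "X = A \<or> X = B" using in_A_or_B by blast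
  next
    assume X: "X = A \<or> X = B"
    have "\<not> X \<subset> Y" if "down_set_chain P Y" for Y
      using in_A_or_B[OF that] X incomparable by blast
    then show "maximal_down_set_chain P X"
      using X chains unfolding maximal_down_set_chain_def by blast
  qed
  then show ?thesis unfolding A_def B_def by blast
qed

lemma chain_subset_antimono: "chain\<^sub>\<subseteq> B \<Longrightarrow> A \<subseteq> B \<Longrightarrow> chain\<^sub>\<subseteq> A"
  unfolding chain_subset_def by blast

lemma add_ord_zero: "0 < m \<Longrightarrow> add_ord m 0 = 1"
  by (simp add: add_ord_def)

lemma add_ord_power_diff:
  assumes "1 < (p::nat)" "e \<le> l"
  shows "add_ord (p ^ l) (p ^ (l - e)) = p ^ e"
proof -
  have pl: "p ^ l = p ^ (l - e) * p ^ e" using assms(2) by (simp flip: power_add)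
  then have "gcd (p ^ (l - e)) (p ^ l) = p ^ (l - e)" by simp
  then show ?thesis using assms(1) unfolding add_ord_def by (simp add: pl)
qed

lemma T_set_nonempty:
  assumes p: "1 < p" and a: "\<And>k. k \<in> {1..n} \<Longrightarrow> a k \<le> lam k"
  shows "T_set p n lam a \<noteq> {}"
proof -
  define g where "g k = (if k \<in> {1..n} \<and> 0 < a k then p ^ (lam k - a k) else 0)" for k
  have "g k < p ^ lam k" if "k \<in> {1..n}" for k
    using p a[OF that] by (simp add: g_def power_strict_increasing)
  moreover have "add_ord (p ^ lam k) (g k) = p ^ a k" if "k \<in> {1..n}" for k
    using p a[OF that] that by (simp add: g_def add_ord_power_diff add_ord_zero)
  ultimately have "g \<in> T_set p n lam a"
    unfolding T_set_def cyc_group_def by (simp add: g_def)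
  then show ?thesis by blast
qed

lemma T_set_exponent_unique:
  "1 < p \<Longrightarrow> g \<in> T_set p n lam a \<Longrightarrow> g \<in> T_set p n lam c \<Longrightarrow> k \<in> {1..n} \<Longrightarrow> a k = c k"
  unfolding T_set_def by (auto simp: power_inject_exp)

lemma R_set_subset_iff:
  assumes p: "1 < p" and a: "\<And>k. k \<in> {1..n} \<Longrightarrow> a k \<le> lam k"
  shows "R_set p n lam a \<subseteq> R_set p n lam b \<longleftrightarrow> (\<forall>k\<in>{1..n}. a k \<le> b k)"
proof
  assume sub: "R_set p n lam a \<subseteq> R_set p n lam b"
  obtain g where g: "g \<in> T_set p n lam a" using T_set_nonempty[of p n a lam] p a by blast
  then have "g \<in> R_set p n lam b" using sub unfolding R_set_def by blast
  then obtain c where c: "\<forall>k\<in>{1..n}. c k \<le> b k" "g \<in> T_set p n lam c"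
    unfolding R_set_def by blast
  show "\<forall>k\<in>{1..n}. a k \<le> b k"
  proof
    fix k assume "k \<in> {1..n}"
    then show "a k \<le> b k" using T_set_exponent_unique[OF p g c(2)] c(1) by simp
  qed
next
  assume "\<forall>k\<in>{1..n}. a k \<le> b k"
  then have "{c. \<forall>k\<in>{1..n}. c k \<le> a k} \<subseteq> {c. \<forall>k\<in>{1..n}. c k \<le> b k}"
    using order_trans by blast
  then show "R_set p n lam a \<subseteq> R_set p n lam b"
    unfolding R_set_def by (rule UN_mono) simp
qed

lemma R_set_cong:
  assumes "\<And>k. k \<in> {1..n} \<Longrightarrow> a k = a' k"
  shows "R_set p n lam a = R_set p n lam a'"
proof -
  have "{b. \<forall>k\<in>{1..n}. b k \<le> a k} = {b. \<forall>k\<in>{1..n}. b k \<le> a' k}" using assms by simp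
  then show ?thesis unfolding R_set_def by simp
qed

lemma mem_J_poset_iff:
  "y \<in> J_poset p n lam \<longleftrightarrow> (\<exists>i j. y = J_set p n lam i j \<and> i \<in> {1..n} \<and> j \<in> {1..lam i})"
  unfolding J_poset_def by blast

locale abelian_p_group_type =
  fixes p n :: nat and lam :: "nat \<Rightarrow> nat"
  assumes p_gt_1: "1 < p" and lam_strict_mono: "strict_mono_on {1..n} lam"
begin

abbreviation J :: "nat \<Rightarrow> nat \<Rightarrow> (nat \<Rightarrow> nat) set" where
  "J \<equiv> J_set p n lam"

lemma lam_le_iff: "i \<in> {1..n} \<Longrightarrow> k \<in> {1..n} \<Longrightarrow> lam i \<le> lam k \<longleftrightarrow> i \<le> k"
  by (rule strict_mono_on_less_eq[OF lam_strict_mono])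

lemma lam_less_iff: "i \<in> {1..n} \<Longrightarrow> k \<in> {1..n} \<Longrightarrow> lam i < lam k \<longleftrightarrow> i < k"
  by (rule strict_mono_on_less[OF lam_strict_mono])

lemma J_set_eq_R_set:
  assumes "i \<in> {1..n}"
  shows "J i j = R_set p n lam (\<lambda>k. j - (lam i - lam k))"
  unfolding J_set_def
proof (rule R_set_cong)
  fix k assume "k \<in> {1..n}"
  then show "(if i \<le> k then j else j - (lam i - lam k)) = j - (lam i - lam k)"
    using lam_le_iff[OF assms] by auto
qed

lemma J_set_subset_iff:
  assumes "i \<in> {1..n}" "i' \<in> {1..n}" "j \<le> lam i"
  shows "J i j \<subseteq> J i' j' \<longleftrightarrow> (\<forall>k\<in>{1..n}. j - (lam i - lam k) \<le> j' - (lam i' - lam k))"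
  unfolding J_set_eq_R_set[OF assms(1)] J_set_eq_R_set[OF assms(2)]
  using assms(3) by (intro R_set_subset_iff p_gt_1) arith

end

locale abelian_p_group_top_gap_one = abelian_p_group_type +
  assumes lam_1_pos: "0 < lam 1" and n_ge_3: "3 \<le> n" and top_gap: "lam n - lam (n - 1) = 1"
begin

lemma indices: "1 \<in> {1..n}" "n - 2 \<in> {1..n}" "n - 1 \<in> {1..n}" "n \<in> {1..n}"
  using n_ge_3 by auto

lemma lam_n_eq: "lam n = lam (n - 1) + 1"
  using top_gap by simp

lemma lam_n2_less: "lam (n - 2) < lam (n - 1)"
  using indices n_ge_3 by (simp add: lam_less_iff)

lemma lam_bounds:
  assumes "k \<in> {1..n}"
  shows "lam 1 \<le> lam k" "lam k \<le> lam n"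
  using assms indices by (auto simp: lam_le_iff)

lemma lam_top_diff_eq: "lam (n - 1) - lam (n - 2) + 1 = lam n - lam (n - 2)"
  using lam_n_eq lam_n2_less by simp

lemma lam_pos: "k \<in> {1..n} \<Longrightarrow> 1 \<le> lam k"
  using lam_bounds(1) lam_1_pos by fastforce

lemma top_index_bounds: "2 \<le> lam n - lam (n - 2)" "lam n - lam (n - 2) \<le> lam n"
  using lam_n_eq lam_n2_less by simp_all

lemma subset_J_1_1_iff:
  assumes "i \<in> {1..n}" "j \<in> {1..lam i}"
  shows "J i j \<subseteq> J 1 1 \<longleftrightarrow> j = 1"
proof -
  have "J i j \<subseteq> J 1 1 \<longleftrightarrow> (\<forall>k\<in>{1..n}. j - (lam i - lam k) \<le> 1 - (lam 1 - lam k))"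
    using assms indices by (simp add: J_set_subset_iff)
  also have "\<dots> \<longleftrightarrow> j = 1"
  proof
    assume "\<forall>k\<in>{1..n}. j - (lam i - lam k) \<le> 1 - (lam 1 - lam k)"
    then have "j - (lam i - lam n) \<le> 1 - (lam 1 - lam n)" using indices by blast
    then show "j = 1" using assms lam_bounds[OF assms(1)] lam_bounds[OF indices(4)] by simp
  qed (use lam_bounds[OF assms(1)] in auto)
  finally show ?thesis .
qed

lemma subset_J_top_iff:
  assumes "i \<in> {1..n}" "j \<le> lam i"
  shows "J i j \<subseteq> J n (lam n - lam (n - 2)) \<longleftrightarrow> j \<le> lam i - lam (n - 2)"
proof -
  have "J i j \<subseteq> J n (lam n - lam (n - 2)) \<longleftrightarrow>
      (\<forall>k\<in>{1..n}. j - (lam i - lam k) \<le> (lam n - lam (n - 2)) - (lam n - lam k))"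
    using assms indices by (simp add: J_set_subset_iff)
  also have "\<dots> \<longleftrightarrow> j \<le> lam i - lam (n - 2)"
  proof
    assume "\<forall>k\<in>{1..n}. j - (lam i - lam k) \<le> (lam n - lam (n - 2)) - (lam n - lam k)"
    then have "j - (lam i - lam (n - 2)) \<le> (lam n - lam (n - 2)) - (lam n - lam (n - 2))"
      using indices by blast
    then show "j \<le> lam i - lam (n - 2)" by simp
  next
    assume "j \<le> lam i - lam (n - 2)"
    moreover have "lam i \<le> lam n" "lam (n - 2) \<le> lam n"
      using lam_bounds(2) assms(1) indices by blast+
    ultimately show "\<forall>k\<in>{1..n}. j - (lam i - lam k) \<le> (lam n - lam (n - 2)) - (lam n - lam k)"
      using lam_bounds(2) by fastforce
  qed
  finally show ?thesis .
qed

lemma J_in_J_poset: "i \<in> {1..n} \<Longrightarrow> 1 \<le> j \<Longrightarrow> j \<le> lam i \<Longrightarrow> J i j \<in> J_poset p n lam"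
  unfolding mem_J_poset_iff by auto

lemma principal_J_1_1: "{y \<in> J_poset p n lam. y \<subseteq> J 1 1} = {J i 1 | i. i \<in> {1..n}}"
proof -
  have "i \<in> {1..n} \<and> j \<in> {1..lam i} \<and> J i j \<subseteq> J 1 1 \<longleftrightarrow> i \<in> {1..n} \<and> j = 1" for i j
    using subset_J_1_1_iff[of i j] lam_pos[of i] by auto
  then have "y \<in> J_poset p n lam \<and> y \<subseteq> J 1 1 \<longleftrightarrow> (\<exists>i. y = J i 1 \<and> i \<in> {1..n})" for y
    unfolding mem_J_poset_iff by metis
  then show ?thesis by auto
qed

lemma principal_J_top:
  "{y \<in> J_poset p n lam. y \<subseteq> J n (lam n - lam (n - 2))} =
     {J (n - 1) j | j. j \<in> {1..lam (n - 1) - lam (n - 2)}}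
     \<union> {J n j | j. j \<in> {1..lam n - lam (n - 2)}}"
proof -
  have "i \<in> {1..n} \<and> j \<in> {1..lam i} \<and> J i j \<subseteq> J n (lam n - lam (n - 2)) \<longleftrightarrow>
      (i = n - 1 \<and> j \<in> {1..lam (n - 1) - lam (n - 2)}) \<or> (i = n \<and> j \<in> {1..lam n - lam (n - 2)})"
    for i j
  proof
    assume ij: "i \<in> {1..n} \<and> j \<in> {1..lam i} \<and> J i j \<subseteq> J n (lam n - lam (n - 2))"
    then have j: "1 \<le> j" "j \<le> lam i - lam (n - 2)" using subset_J_top_iff by auto
    then have "lam (n - 2) < lam i" by simp
    then have "n - 2 < i" using ij lam_less_iff[OF indices(2)] by blast
    then have "i = n - 1 \<or> i = n" using ij by auto
    then show "(i = n - 1 \<and> j \<in> {1..lam (n - 1) - lam (n - 2)}) \<or> (i = n \<and> j \<in> {1..lam n - lam (n - 2)})"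
      using j by auto
  next
    assume "(i = n - 1 \<and> j \<in> {1..lam (n - 1) - lam (n - 2)}) \<or> (i = n \<and> j \<in> {1..lam n - lam (n - 2)})"
    then have "i \<in> {1..n}" "j \<in> {1..lam i}" "j \<le> lam i - lam (n - 2)"
      using indices by auto
    then show "i \<in> {1..n} \<and> j \<in> {1..lam i} \<and> J i j \<subseteq> J n (lam n - lam (n - 2))"
      by (simp add: subset_J_top_iff)
  qed
  then have "y \<in> J_poset p n lam \<and> y \<subseteq> J n (lam n - lam (n - 2)) \<longleftrightarrow>
      (\<exists>j. y = J (n - 1) j \<and> j \<in> {1..lam (n - 1) - lam (n - 2)}) \<or>
      (\<exists>j. y = J n j \<and> j \<in> {1..lam n - lam (n - 2)})" for y
    unfolding mem_J_poset_iff by metis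
  then show ?thesis by auto
qed

lemma chain_J_level_1: "chain\<^sub>\<subseteq> {J i 1 | i. i \<in> {1..n}}"
proof -
  have mono: "J i 1 \<subseteq> J i' 1" if "i \<in> {1..n}" "i' \<in> {1..n}" "i' \<le> i" for i i'
    using that lam_pos[OF that(1)] lam_le_iff[OF that(2,1)]
    by (simp add: J_set_subset_iff diff_le_mono2)
  show ?thesis unfolding chain_subset_def
  proof (intro ballI)
    fix x y assume "x \<in> {J i 1 | i. i \<in> {1..n}}" "y \<in> {J i 1 | i. i \<in> {1..n}}"
    then obtain i i' where "x = J i 1" "y = J i' 1" "i \<in> {1..n}" "i' \<in> {1..n}" by blast
    then show "x \<subseteq> y \<or> y \<subseteq> x" using mono nle_le[of i i'] by blast
  qed
qed

(* The two top rows interleave: J(n,1) \<subseteq> J(n-1,1) \<subseteq> J(n,2) \<subseteq> J(n-1,2) \<subseteq> ... *)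
lemma J_top_rows_subset:
  assumes "i \<in> {n - 1, n}" "i' \<in> {n - 1, n}" "j \<le> lam i"
    and rank: "2 * j + of_bool (i = n - 1) \<le> 2 * j' + of_bool (i' = n - 1)"
  shows "J i j \<subseteq> J i' j'"
proof -
  have top: "n - 1 \<noteq> n" "lam n = Suc (lam (n - 1))" using n_ge_3 lam_n_eq by auto
  have "j - (lam i - l) \<le> j' - (lam i' - l)" for l
  proof -
    consider "i = i'" | "i = n" "i' = n - 1" | "i = n - 1" "i' = n" using assms(1,2) by blast
    then show ?thesis
    proof cases
      case 1
      then have "j \<le> j'" using rank by simp
      then show ?thesis using 1 by (simp add: diff_le_mono)
    next
      case 2
      then have "j \<le> j'" "lam i = Suc (lam i')" using rank top by simp_all
      then show ?thesis by arith
    next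
      case 3
      then have "j < j'" "lam i' = Suc (lam i)" using rank top by simp_all
      then show ?thesis by arith
    qed
  qed
  moreover have "i \<in> {1..n}" "i' \<in> {1..n}" using assms(1,2) indices by auto
  ultimately show ?thesis using assms(3) by (simp add: J_set_subset_iff)
qed

lemma chain_J_top_rows: "chain\<^sub>\<subseteq> {J i j | i j. i \<in> {n - 1, n} \<and> j \<le> lam i}"
  unfolding chain_subset_def
proof (intro ballI)
  fix x y assume "x \<in> {J i j | i j. i \<in> {n - 1, n} \<and> j \<le> lam i}"
    "y \<in> {J i j | i j. i \<in> {n - 1, n} \<and> j \<le> lam i}"
  then obtain i j i' j' where xy: "x = J i j" "y = J i' j'"
    and ij: "i \<in> {n - 1, n}" "i' \<in> {n - 1, n}" "j \<le> lam i" "j' \<le> lam i'" by blast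
  consider "2 * j + of_bool (i = n - 1) \<le> 2 * j' + of_bool (i' = n - 1)"
    | "2 * j' + of_bool (i' = n - 1) \<le> 2 * j + of_bool (i = n - 1)" by linarith
  then show "x \<subseteq> y \<or> y \<subseteq> x"
  proof cases
    case 1
    then show ?thesis using J_top_rows_subset[OF ij(1,2,3)] xy by simp
  next
    case 2
    then show ?thesis using J_top_rows_subset[OF ij(2,1,4)] xy by simp
  qed
qed

lemma J_1_1_top_incomparable:
  "\<not> J 1 1 \<subseteq> J n (lam n - lam (n - 2))" "\<not> J n (lam n - lam (n - 2)) \<subseteq> J 1 1"
  using subset_J_top_iff[OF indices(1)] lam_pos[OF indices(1)] lam_bounds(1)[OF indices(2)]
    subset_J_1_1_iff[OF indices(4)] top_index_bounds by auto

lemma J_n2_1_n_2_incomparable: "\<not> J (n - 2) 1 \<subseteq> J n 2" "\<not> J n 2 \<subseteq> J (n - 2) 1"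
proof
  assume "J (n - 2) 1 \<subseteq> J n 2"
  then have "\<forall>k\<in>{1..n}. 1 - (lam (n - 2) - lam k) \<le> 2 - (lam n - lam k)"
    using J_set_subset_iff[OF indices(2,4) lam_pos[OF indices(2)]] by blast
  from this indices(2) have "1 - (lam (n - 2) - lam (n - 2)) \<le> 2 - (lam n - lam (n - 2))"
    by (rule bspec)
  then show False using top_index_bounds by simp
next
  show "\<not> J n 2 \<subseteq> J (n - 2) 1"
  proof
    assume "J n 2 \<subseteq> J (n - 2) 1"
    moreover have "2 \<le> lam n" using top_index_bounds by linarith
    ultimately have "\<forall>k\<in>{1..n}. 2 - (lam n - lam k) \<le> 1 - (lam (n - 2) - lam k)"
      using J_set_subset_iff[OF indices(4,2)] by blast
    from this indices(4) have "2 - (lam n - lam n) \<le> 1 - (lam (n - 2) - lam n)"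
      by (rule bspec)
    then show False by simp
  qed
qed

lemma J_n2_1_n_2_subset:
  assumes i: "i \<in> {1..n}" and j: "2 \<le> j" "j \<le> lam i" "lam i - lam (n - 2) < j"
  shows "J (n - 2) 1 \<subseteq> J i j" "J n 2 \<subseteq> J i j"
proof -
  have "lam i \<le> lam n" using lam_bounds(2)[OF i] .
  then have "1 - (lam (n - 2) - l) \<le> j - (lam i - l)" "2 - (lam n - l) \<le> j - (lam i - l)" for l
    using j(1,3) by arith+
  moreover have "2 \<le> lam n" using top_index_bounds by linarith
  ultimately show "J (n - 2) 1 \<subseteq> J i j" "J n 2 \<subseteq> J i j"
    using J_set_subset_iff[OF indices(2) i lam_pos[OF indices(2)]]
      J_set_subset_iff[OF indices(4) i] by blast+
qed

lemma chain_principal_imp_below: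
  assumes x: "x \<in> J_poset p n lam" and chain: "chain\<^sub>\<subseteq> {y \<in> J_poset p n lam. y \<subseteq> x}"
  shows "x \<subseteq> J 1 1 \<or> x \<subseteq> J n (lam n - lam (n - 2))"
proof -
  obtain i j where xij: "x = J i j" and i: "i \<in> {1..n}" and j: "j \<in> {1..lam i}"
    using x unfolding mem_J_poset_iff by blast
  consider "j = 1" | "j \<le> lam i - lam (n - 2)" | "2 \<le> j" "lam i - lam (n - 2) < j"
    using j by force
  then show ?thesis
  proof cases
    case 1
    then show ?thesis using subset_J_1_1_iff[OF i j] xij by simp
  next
    case 2
    then show ?thesis using subset_J_top_iff[OF i] j xij by simp
  next
    case 3
    have "2 \<le> lam n" using top_index_bounds by linarith
    then have "J (n - 2) 1 \<in> {y \<in> J_poset p n lam. y \<subseteq> x}" "J n 2 \<in> {y \<in> J_poset p n lam. y \<subseteq> x}"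
      using J_n2_1_n_2_subset[OF i 3(1) _ 3(2)] j xij indices lam_pos
      by (auto intro!: J_in_J_poset)
    then show ?thesis
      using chain J_n2_1_n_2_incomparable unfolding chain_subset_def by blast
  qed
qed

lemma level_1_chain_ne_top_rows_chain:
  "{J i 1 | i. i \<in> {1..n}} \<noteq>
     {J (n - 1) j | j. j \<in> {1..lam (n - 1) - lam (n - 2)}}
     \<union> {J n j | j. j \<in> {1..lam n - lam (n - 2)}}"
  using J_1_1_top_incomparable(1) indices(1) unfolding principal_J_top[symmetric] by blast

lemma chain_principal_J_top: "chain\<^sub>\<subseteq> {y \<in> J_poset p n lam. y \<subseteq> J n (lam n - lam (n - 2))}"
proof (rule chain_subset_antimono[OF chain_J_top_rows])
  show "{y \<in> J_poset p n lam. y \<subseteq> J n (lam n - lam (n - 2))} \<subseteq>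
      {J i j | i j. i \<in> {n - 1, n} \<and> j \<le> lam i}"
    unfolding principal_J_top
  proof
    fix y assume "y \<in> {J (n - 1) j | j. j \<in> {1..lam (n - 1) - lam (n - 2)}}
      \<union> {J n j | j. j \<in> {1..lam n - lam (n - 2)}}"
    then obtain i j where "y = J i j" "i \<in> {n - 1, n}" "j \<le> lam i - lam (n - 2)"
      by auto
    moreover from this have "j \<le> lam i" by simp
    ultimately show "y \<in> {J i j | i j. i \<in> {n - 1, n} \<and> j \<le> lam i}" by blast
  qed
qed

theorem maximal_down_set_chains_eq:
  "{X. maximal_down_set_chain (J_poset p n lam) X} =
     {{J i 1 | i. i \<in> {1..n}},
      {J (n - 1) j | j. j \<in> {1..lam (n - 1) - lam (n - 2)}}
      \<union> {J n j | j. j \<in> {1..lam n - lam (n - 2)}}}"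
proof -
  have "J 1 1 \<in> J_poset p n lam" "J n (lam n - lam (n - 2)) \<in> J_poset p n lam"
    using J_in_J_poset indices lam_pos top_index_bounds by auto
  then have "{X. maximal_down_set_chain (J_poset p n lam) X} =
      {{y \<in> J_poset p n lam. y \<subseteq> J 1 1}, {y \<in> J_poset p n lam. y \<subseteq> J n (lam n - lam (n - 2))}}"
    by (intro maximal_down_set_chains_eq_principal_pair J_1_1_top_incomparable
        chain_principal_imp_below chain_J_level_1[folded principal_J_1_1] chain_principal_J_top)
  then show ?thesis unfolding principal_J_1_1 principal_J_top .
qed

end

theorem mainTheorem20:
  fixes p n :: nat and lam :: "nat \<Rightarrow> nat"
  assumes "prime p" and "p \<noteq> 2"
    and "0 < lam 1" and "strict_mono_on {1..n} lam"
    and "n \<ge> 3" and "lam n - lam (n - 1) = 1"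
  shows "{J_set p n lam i 1 | i. i \<in> {1..n}} \<noteq>
           {J_set p n lam (n - 1) j | j. j \<in> {1..lam (n - 1) - lam (n - 2)}}
           \<union> {J_set p n lam n j | j. j \<in> {1..lam (n - 1) - lam (n - 2) + 1}}
       \<and> {X. maximal_down_set_chain (J_poset p n lam) X} =
           {{J_set p n lam i 1 | i. i \<in> {1..n}},
            {J_set p n lam (n - 1) j | j. j \<in> {1..lam (n - 1) - lam (n - 2)}}
            \<union> {J_set p n lam n j | j. j \<in> {1..lam (n - 1) - lam (n - 2) + 1}}}"
proof -
  interpret abelian_p_group_top_gap_one p n lam
    using assms prime_gt_1_nat[OF assms(1)] by unfold_locales simp_all
  show ?thesis
    unfolding lam_top_diff_eq
    using level_1_chain_ne_top_rows_chain maximal_down_set_chains_eq by blast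
qed

end
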